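(* Let $k\geq2$, $n$, $r$ be positive integers with $r<\frac{(k-1)n}{k}$. Let $\sigma$ be a cyclic order on $[n]$, and let $\mathcal{F}$ be a $k$-wise intersecting family of $\sigma$-intervals of length $r$. If $|\mathcal{F}|=r$, then there is a point $x$ such that $\mathcal{F}$ consists of all $\sigma$-intervals of length $r$ containing $x$.
   Context: A cyclic order on $[n]$ is a permutation $\sigma=(\sigma(1),\dots,\sigma(n))$ of $[n]$ considered up to cyclic rotation. For $x\in[n]$, the $\sigma$-interval of length $r$ starting at $x$ is $\{\sigma(x),\sigma(x+1),\dots,\sigma(x+r-1)\}$, with indices taken modulo $n$ (in $[n]$). A family $\mathcal{F}$ is $k$-wise intersecting if $F_1\cap\cdots\cap F_k\neq\emptyset$ for all $F_1,\dots,F_k\in\mathcal{F}$. *)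

theory Defs
  imports Complex_Main
begin

text \<open>A cyclic order on [n] = {1..n} is represented by a permutation sigma of {1..n};
  rotation does not change the set of sigma-intervals.\<close>

definition cyclic_order :: "nat \<Rightarrow> (nat \<Rightarrow> nat) \<Rightarrow> bool" where
  "cyclic_order n \<sigma> \<longleftrightarrow> bij_betw \<sigma> {1..n} {1..n}"

definition sigma_interval :: "nat \<Rightarrow> (nat \<Rightarrow> nat) \<Rightarrow> nat \<Rightarrow> nat \<Rightarrow> nat set" where
  "sigma_interval n \<sigma> r x = {\<sigma> (((x + i - 1) mod n) + 1) | i. i < r}"

definition sigma_intervals :: "nat \<Rightarrow> (nat \<Rightarrow> nat) \<Rightarrow> nat \<Rightarrow> nat set set" where
  "sigma_intervals n \<sigma> r = {sigma_interval n \<sigma> r x | x. x \<in> {1..n}}"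

definition k_wise_intersecting :: "nat \<Rightarrow> 'a set set \<Rightarrow> bool" where
  "k_wise_intersecting k \<F> \<longleftrightarrow>
     (\<forall>Fs :: nat \<Rightarrow> 'a set. (\<forall>i<k. Fs i \<in> \<F>) \<longrightarrow> (\<Inter>i<k. Fs i) \<noteq> {})"

end

theory Submission
  imports Defs
begin

text \<open>
  Via \<sigma>, identify [n] with the residues modulo n, so that \<sigma>-intervals of length r become
  arcs {y, y+1, ..., y+r-1} and \<F> is determined by the set S of r starting points of its
  arcs; write g = n - r, so that the hypothesis reads k g > n. If some window of g consecutive
  residues misses S, then S is the complementary window and every arc starting in S contains
  its last point. Otherwise follow the greedy walk that jumps from a start to the farthest start
  at distance at most g. The residues skipped by the jumps of one period of this walk are
  distinct and outside S, so these gaps add up to at most g; since k g > n, some k consecutive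
  jumps then cover a full turn, and the k arcs starting at those points have no common point.
\<close>

definition arc :: "int \<Rightarrow> int \<Rightarrow> int \<Rightarrow> int set" where
  "arc N R y = {p \<in> {0..<N}. (p - y) mod N < R}"

lemma arc_mod [simp]: "arc N R (y mod N) = arc N R y"
  by (simp add: arc_def mod_diff_right_eq)

lemma arc_inj_on:
  fixes N R :: int
  assumes "0 < R" "R < N"
  shows "inj_on (arc N R) {0..<N}"
proof (rule inj_onI)
  fix y y' assume y: "y \<in> {0..<N}" "y' \<in> {0..<N}" and eq: "arc N R y = arc N R y'"
  have "y \<in> arc N R y'" using y assms eq[symmetric] by (simp add: arc_def)
  then have d: "(y - y') mod N < R" by (simp add: arc_def)
  \<comment> \<open>y lies in arc y' but y - 1 does not, so y is the first point of arc y'\<close>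
  have "(y - 1) mod N \<notin> arc N R y"
    using assms by (simp add: arc_def mod_diff_left_eq zmod_minus1)
  then have "(y - 1) mod N \<notin> arc N R y'" using eq by simp
  then have "\<not> ((y - 1) - y') mod N < R" using assms by (simp add: arc_def mod_diff_left_eq)
  moreover have "((y - 1) - y') mod N = ((y - y') mod N - 1) mod N"
    by (simp add: mod_diff_left_eq algebra_simps)
  moreover have "0 \<le> (y - y') mod N" using assms by simp
  ultimately have "(y - y') mod N = 0"
    using d assms by (smt (verit) mod_pos_pos_trivial)
  then have "y mod N = y' mod N" by (simp add: mod_eq_dvd_iff mod_eq_0_iff_dvd)
  then show "y = y'" using y by simp
qed

lemma inj_on_mod_interval:
  fixes N a b :: int
  assumes "0 < N" "b - a \<le> N"
  shows "inj_on (\<lambda>j. j mod N) {a<..b}"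
proof (rule inj_onI)
  fix j j' assume j: "j \<in> {a<..b}" "j' \<in> {a<..b}" "j mod N = j' mod N"
  then have "N dvd j - j'" by (simp add: mod_eq_dvd_iff)
  moreover have "\<bar>j - j'\<bar> < N" using j assms by auto
  ultimately show "j = j'"
    using dvd_imp_le_int[of "j - j'" N] assms by fastforce
qed

lemma card_residues_diff:
  fixes N R :: int
  assumes "S \<subseteq> {0..<N}" "card S = nat R" "0 < R" "R < N"
  shows "card ({0..<N} - S) = nat (N - R)"
  using assms card_Diff_subset[of S "{0..<N}"] finite_subset[of S "{0..<N}"] by simp

lemma starts_eq_of_gap:
  fixes N R c :: int and S :: "int set"
  assumes "0 < R" "R < N" "S \<subseteq> {0..<N}" "card S = nat R"
    and gap: "\<And>j. j \<in> {c<..c + (N - R)} \<Longrightarrow> j mod N \<notin> S"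
  shows "S = {y \<in> {0..<N}. (c - y) mod N < R}"
proof -
  define T where "T = (\<lambda>j. j mod N) ` {c<..c + (N - R)}"
  have "inj_on (\<lambda>j. j mod N) {c<..c + (N - R)}"
    using assms by (intro inj_on_mod_interval) auto
  then have "card T = nat (N - R)" unfolding T_def by (simp add: card_image)
  moreover have "T \<subseteq> {0..<N} - S" unfolding T_def using gap assms by auto
  ultimately have T: "T = {0..<N} - S"
    using card_subset_eq[of "{0..<N} - S" T] card_residues_diff[OF assms(3,4,1,2)] by simp
  have "y \<in> T \<longleftrightarrow> R \<le> (c - y) mod N" if y: "y \<in> {0..<N}" for y
  proof
    assume "y \<in> T"
    then obtain j where j: "j \<in> {c<..c + (N - R)}" "y = j mod N" unfolding T_def by auto
    have "(c - y) mod N = (c - j + N) mod N" using j(2) by (simp add: mod_diff_right_eq)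
    also have "\<dots> = c - j + N" using j assms by (intro mod_pos_pos_trivial) auto
    finally show "R \<le> (c - y) mod N" using j by auto
  next
    assume d: "R \<le> (c - y) mod N"
    define j where "j = c - (c - y) mod N + N"
    have "j \<in> {c<..c + (N - R)}" using d assms pos_mod_bound[of N "c - y"] by (auto simp: j_def)
    moreover have "j - y = N * ((c - y) div N + 1)"
      unfolding j_def using div_mult_mod_eq[of "c - y" N] by (simp add: algebra_simps)
    then have "j mod N = y mod N" by (simp add: mod_eq_dvd_iff)
    then have "j mod N = y" using y by simp
    ultimately show "y \<in> T" unfolding T_def by force
  qed
  then show ?thesis using T assms(3) by (auto simp: subset_iff not_le[symmetric])
qed

lemma obtain_crossing_step:
  fixes x :: "nat \<Rightarrow> int"
  assumes "x 0 \<le> q" "q < x k"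
  obtains i where "i < k" "x i \<le> q" "q < x (Suc i)"
  using assms
proof (induction k)
  case (Suc k)
  show ?case
  proof (cases "q < x k")
    case True
    with Suc show ?thesis by (meson less_SucI)
  next
    case False
    with Suc.prems show ?thesis by (metis lessI not_less)
  qed
qed simp

lemma no_common_point_of_covering_chain:
  fixes x :: "nat \<Rightarrow> int" and N R :: int
  assumes "0 < R" "R < N"
    and step: "\<And>i. i < k \<Longrightarrow> x (Suc i) \<le> x i + (N - R)"
    and wrap: "x 0 + N \<le> x k"
  shows "\<not> (\<forall>i<k. p \<in> arc N R (x i))"
proof
  assume common: "\<forall>i<k. p \<in> arc N R (x i)"
  have "0 < k" using wrap assms by (cases k) auto
  define q where "q = x 0 + (p - x 0) mod N"
  have "x 0 \<le> q" using assms by (simp add: q_def)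
  have q_gap: "q + (N - R) < x 0 + N"
    using common \<open>0 < k\<close> by (simp add: q_def arc_def)
  then have "q < x k" using wrap assms by linarith
  then obtain i where i: "i < k" "x i \<le> q" "q < x (Suc i)"
    using obtain_crossing_step \<open>x 0 \<le> q\<close> by blast
  have up: "x (Suc i) \<le> q + (N - R)" using step[OF i(1)] i by linarith
  show False
  proof (cases "Suc i < k")
    case True
    have "(p - x (Suc i)) mod N = ((p - x 0) mod N + (x 0 - x (Suc i))) mod N"
      by (simp add: mod_add_left_eq)
    also have "\<dots> = (q - x (Suc i)) mod N" by (simp add: q_def algebra_simps)
    also have "\<dots> = (q - x (Suc i) + N) mod N" by simp
    also have "\<dots> = q - x (Suc i) + N"
      using i up assms by (intro mod_pos_pos_trivial) auto
    finally have "R \<le> (p - x (Suc i)) mod N" using up by linarith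
    with common True show False by (force simp: arc_def)
  next
    case False
    then have "Suc i = k" using i by simp
    then show False using up q_gap wrap by simp
  qed
qed

lemma obtain_cycle_of_finite_range:
  fixes g :: "nat \<Rightarrow> 'a"
  assumes "finite (range g)"
  obtains a m where "0 < m" "g (a + m) = g a" "inj_on (\<lambda>s. g (a + s)) {..<m}"
proof -
  have "\<not> inj g" using assms finite_imageD by blast
  then have "\<exists>b. \<exists>a<b. g a = g b" unfolding inj_def by (metis linorder_neq_iff)
  define b where "b = (LEAST b. \<exists>a<b. g a = g b)"
  then obtain a where a: "a < b" "g a = g b" using LeastI_ex[of "\<lambda>b. \<exists>a<b. g a = g b"] \<open>\<exists>b. _\<close> by blast
  have distinct: "g s \<noteq> g s'" if "s < s'" "s' < b" for s s'
    using not_less_Least[of s' "\<lambda>b. \<exists>a<b. g a = g b"] that unfolding b_def by blast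
  show thesis
  proof (rule that[of "b - a" a])
    show "inj_on (\<lambda>s. g (a + s)) {..<b - a}"
      by (rule inj_onI) (metis distinct add_less_cancel_left lessThan_iff less_diff_conv linorder_neq_iff add.commute)
  qed (use a in auto)
qed

lemma obtain_block_advance:
  fixes w :: "nat \<Rightarrow> int"
  assumes per: "\<And>s. w (s + m) = w s + D" and "0 < m" and "int m * N \<le> int k * D"
  obtains j where "N \<le> w (Suc j * k) - w (j * k)"
proof -
  have per_q: "w (q * m) = w 0 + int q * D" for q
  proof (induction q)
    case (Suc q)
    have "w (Suc q * m) = w (q * m + m)" by (simp add: add.commute)
    also have "\<dots> = w (q * m) + D" by (rule per)
    finally show ?case using Suc by (simp add: algebra_simps)
  qed simp
  \<comment> \<open>the m blocks of k steps together advance by k D \<ge> m N\<close>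
  have "(\<Sum>j<m. w (Suc j * k) - w (j * k)) = w (m * k) - w 0"
    using sum_lessThan_telescope[of "\<lambda>j. w (j * k)" m] by simp
  also have "\<dots> = int k * D" using per_q[of k] by (simp add: mult.commute)
  finally have sum_eq: "(\<Sum>j<m. w (Suc j * k) - w (j * k)) = int k * D" .
  have "\<exists>j<m. N \<le> w (Suc j * k) - w (j * k)"
  proof (rule ccontr)
    assume "\<not> ?thesis"
    then have "(\<Sum>j<m. w (Suc j * k) - w (j * k)) < (\<Sum>j<m. N)"
      using \<open>0 < m\<close> by (intro sum_strict_mono) auto
    then show False using sum_eq assms(3) by simp
  qed
  then show thesis using that by blast
qed

context
  fixes N G :: int and S :: "int set"
  assumes hits_window: "\<And>c. \<exists>j\<in>{c<..c + G}. j mod N \<in> S"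
begin

definition greedy_next :: "int \<Rightarrow> int" where
  "greedy_next x = Max {j \<in> {x<..x + G}. j mod N \<in> S}"

lemma greedy_next:
  shows greedy_next_gt: "x < greedy_next x"
    and greedy_next_le: "greedy_next x \<le> x + G"
    and greedy_next_mem: "greedy_next x mod N \<in> S"
    and greedy_next_maximal: "greedy_next x < j \<Longrightarrow> j \<le> x + G \<Longrightarrow> j mod N \<notin> S"
proof -
  define A where "A = {j \<in> {x<..x + G}. j mod N \<in> S}"
  have fin: "finite A" by (rule finite_subset[of _ "{x<..x + G}"]) (auto simp: A_def)
  have "A \<noteq> {}" using hits_window[of x] by (auto simp: A_def)
  moreover have "greedy_next x = Max A" by (simp add: greedy_next_def A_def)
  ultimately have max: "greedy_next x \<in> A" "\<And>j. j \<in> A \<Longrightarrow> j \<le> greedy_next x"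
    using fin by simp_all
  then show "x < greedy_next x" "greedy_next x \<le> x + G" "greedy_next x mod N \<in> S"
    by (auto simp: A_def)
  show "j mod N \<notin> S" if "greedy_next x < j" "j \<le> x + G"
  proof
    assume "j mod N \<in> S"
    then have "j \<in> A" using that max(1) by (auto simp: A_def)
    then show False using max(2)[of j] that by simp
  qed
qed

lemma greedy_next_shift: "greedy_next (x + N * c) = greedy_next x + N * c"
proof -
  define A where "A = {j \<in> {x<..x + G}. j mod N \<in> S}"
  have "{j \<in> {x + N * c<..x + N * c + G}. j mod N \<in> S} = (\<lambda>j. j + N * c) ` A"
  proof (intro set_eqI iffI)
    fix j assume j: "j \<in> {j \<in> {x + N * c<..x + N * c + G}. j mod N \<in> S}"
    have "(j - N * c) mod N = j mod N" using mod_mult_self1[of j "- c" N] by (simp add: algebra_simps)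
    with j show "j \<in> (\<lambda>j. j + N * c) ` A"
      by (intro image_eqI[of _ _ "j - N * c"]) (auto simp: A_def)
  qed (auto simp: A_def)
  then have "greedy_next (x + N * c) = Max ((\<lambda>j. j + N * c) ` A)"
    by (simp add: greedy_next_def)
  also have "\<dots> = Max A + N * c"
  proof (rule mono_Max_commute[symmetric])
    show "mono (\<lambda>j::int. j + N * c)" by (rule monoI) simp
    show "finite A" by (rule finite_subset[of _ "{x<..x + G}"]) (auto simp: A_def)
    show "A \<noteq> {}" using hits_window[of x] by (auto simp: A_def)
  qed
  finally show ?thesis by (simp add: greedy_next_def A_def)
qed

lemma funpow_greedy_next_shift: "(greedy_next ^^ t) (x + N * c) = (greedy_next ^^ t) x + N * c"
  by (induction t) (simp_all add: greedy_next_shift)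

lemma greedy_next_eq_of_overlap:
  assumes "j \<in> {greedy_next x<..x + G}" "j \<in> {greedy_next x'<..x' + G}"
  shows "greedy_next x = greedy_next x'"
proof (rule ccontr)
  assume "greedy_next x \<noteq> greedy_next x'"
  then consider "greedy_next x < greedy_next x'" | "greedy_next x' < greedy_next x" by linarith
  then show False
  proof cases
    case 1
    then show False using assms greedy_next_maximal[of x "greedy_next x'"] greedy_next_mem[of x'] by simp
  next
    case 2
    then show False using assms greedy_next_maximal[of x' "greedy_next x"] greedy_next_mem[of x] by simp
  qed
qed

lemma greedy_gap_residues_eq:
  assumes "j \<in> {greedy_next x<..x + G}" "j' \<in> {greedy_next x'<..x' + G}" "j mod N = j' mod N"
  shows "greedy_next x mod N = greedy_next x' mod N"
proof -
  obtain c where c: "j' - j = N * c" using assms(3) by (metis dvdE mod_eq_dvd_iff)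
  have shift: "greedy_next x' = greedy_next (x' - N * c) + N * c"
    using greedy_next_shift[of "x' - N * c" c] by simp
  then have "j \<in> {greedy_next (x' - N * c)<..x' - N * c + G}" using assms(2) c by auto
  then have "greedy_next x = greedy_next (x' - N * c)" by (rule greedy_next_eq_of_overlap[OF assms(1)])
  then show ?thesis using shift by simp
qed

lemma greedy_orbit_periodic:
  assumes "0 < N"
  obtains w :: "nat \<Rightarrow> int" and m :: nat and W :: int
  where "\<And>s. w (Suc s) = greedy_next (w s)" "\<And>s. w s mod N \<in> S" "0 < m" "0 < W"
    "\<And>s. w (s + m) = w s + N * W" "inj_on (\<lambda>s. w (Suc s) mod N) {..<m}"
proof -
  define u where "u t = (greedy_next ^^ Suc t) 0" for t
  have "finite (range (\<lambda>t. u t mod N))"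
    by (rule finite_subset[of _ "{0..<N}"]) (use assms in auto)
  then obtain a m where m: "0 < m" "u (a + m) mod N = u a mod N"
    and inj: "inj_on (\<lambda>s. u (a + s) mod N) {..<m}"
    by (rule obtain_cycle_of_finite_range)
  define w where "w s = u (a + s)" for s
  have w_Suc: "w (Suc s) = greedy_next (w s)" for s by (simp add: w_def u_def)
  have w_mem: "w s mod N \<in> S" for s by (simp add: w_def u_def greedy_next_mem)
  have w_funpow: "w (s + t) = (greedy_next ^^ t) (w s)" for s t
    by (induction t) (simp_all add: w_Suc)
  have "N dvd w m - w 0" using m(2) by (simp add: w_def mod_eq_dvd_iff)
  then obtain W where "w m - w 0 = N * W" by (elim dvdE)
  then have W: "w m = w 0 + N * W" by simp
  have "strict_mono w" by (simp add: strict_mono_Suc_iff w_Suc greedy_next_gt)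
  then have "w 0 < w m" using m(1) by (simp add: strict_mono_less)
  then have "0 < W" using W assms by (simp add: zero_less_mult_iff)
  have per: "w (s + m) = w s + N * W" for s
    using w_funpow[of m s] w_funpow[of 0 s] W by (simp add: add.commute funpow_greedy_next_shift)
  have "inj_on (\<lambda>s. w (Suc s) mod N) {..<m}"
  proof (rule inj_onI)
    \<comment> \<open>the residue of w m is that of w 0, so wrap the index m around to 0\<close>
    fix s s' assume s: "s \<in> {..<m}" "s' \<in> {..<m}" and eq: "w (Suc s) mod N = w (Suc s') mod N"
    define wrap where "wrap t = (if t = m then 0 else t)" for t
    have "w m mod N = w 0 mod N" using m(2) by (simp add: w_def)
    then have "w (Suc t) mod N = w (wrap (Suc t)) mod N" for t by (simp add: wrap_def)
    then have "wrap (Suc s) = wrap (Suc s')"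
      using inj_onD[OF inj, of "wrap (Suc s)" "wrap (Suc s')"] eq s by (auto simp: wrap_def w_def)
    then show "s = s'" using s by (auto simp: wrap_def split: if_splits)
  qed
  with w_Suc w_mem m(1) \<open>0 < W\<close> per show thesis by (rule that)
qed

lemma greedy_orbit_gap_bound:
  assumes "0 < N" "G \<le> N" "S \<subseteq> {0..<N}" "card ({0..<N} - S) \<le> nat G"
    and w_Suc: "\<And>s. w (Suc s) = greedy_next (w s)"
    and w_m: "w m = w 0 + N * W"
    and inj: "inj_on (\<lambda>s. w (Suc s) mod N) {..<m}"
  shows "int m * G \<le> N * W + G"
proof -
  define E where "E s = (\<lambda>j. j mod N) ` {w (Suc s)<..w s + G}" for s
  have step: "w s < w (Suc s)" "w (Suc s) \<le> w s + G" for s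
    by (simp_all add: w_Suc greedy_next_gt greedy_next_le)
  have card_E: "card (E s) = nat (w s + G - w (Suc s))" for s
  proof -
    have "inj_on (\<lambda>j. j mod N) {w (Suc s)<..w s + G}"
      using step[of s] assms(1,2) by (intro inj_on_mod_interval) auto
    then show ?thesis by (simp add: E_def card_image)
  qed
  have E_sub: "E s \<subseteq> {0..<N} - S" for s
    using greedy_next_maximal[of "w s"] assms(1) by (auto simp: E_def w_Suc)
  \<comment> \<open>two gaps sharing a residue would force equal residues of the points after them\<close>
  have "E s \<inter> E s' = {}" if "s \<in> {..<m}" "s' \<in> {..<m}" "s \<noteq> s'" for s s'
    using greedy_gap_residues_eq[of _ "w s" _ "w s'"] inj_onD[OF inj _ that(1,2)] that(3)
    by (fastforce simp: E_def w_Suc)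
  then have "(\<Sum>s<m. card (E s)) = card (\<Union>s<m. E s)"
    by (intro card_UN_disjoint[symmetric]) (auto simp: E_def)
  also have "\<dots> \<le> card ({0..<N} - S)" using E_sub by (intro card_mono) auto
  finally have "(\<Sum>s<m. nat (w s + G - w (Suc s))) \<le> nat G" using assms(4) card_E by simp
  moreover have "(\<Sum>s<m. w s + G - w (Suc s)) = int (\<Sum>s<m. nat (w s + G - w (Suc s)))"
    using step(2) by (simp add: of_nat_sum)
  moreover have "0 < G" using step[of 0] by linarith
  ultimately have "(\<Sum>s<m. w s + G - w (Suc s)) \<le> G" by linarith
  moreover have "(\<Sum>s<m. w s + G - w (Suc s)) = int m * G - (w m - w 0)"
    using sum_lessThan_telescope[of w m] by (simp add: sum_subtractf sum.distrib)
  ultimately show ?thesis using w_m by simp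
qed

lemma obtain_covering_chain:
  assumes "0 < N" "N < int k * G" "G \<le> N" "S \<subseteq> {0..<N}" "card ({0..<N} - S) \<le> nat G"
  obtains x :: "nat \<Rightarrow> int"
  where "\<And>i. x i mod N \<in> S" "\<And>i. x (Suc i) \<le> x i + G" "x 0 + N \<le> x k"
proof -
  obtain w m W where w_Suc: "\<And>s. w (Suc s) = greedy_next (w s)" and w_mem: "\<And>s. w s mod N \<in> S"
    and "0 < m" "0 < W" and per: "\<And>s. w (s + m) = w s + N * W"
    and inj: "inj_on (\<lambda>s. w (Suc s) mod N) {..<m}"
    using greedy_orbit_periodic[OF assms(1)] by blast
  have "0 < int k * G" using assms(1,2) by linarith
  then have "0 < G" by (simp add: zero_less_mult_iff)
  have "int m * G \<le> N * W + G"
    using greedy_orbit_gap_bound[OF assms(1,3,4,5) w_Suc _ inj] per[of 0] by simp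
  moreover have "N * W < int k * G * W" using assms(2) \<open>0 < W\<close> by simp
  ultimately have "int m * G < (int k * W + 1) * G" by (simp add: algebra_simps)
  then have "int m \<le> int k * W" using \<open>0 < G\<close> mult_less_cancel_right_pos by fastforce
  then have "int m * N \<le> int k * (N * W)" using assms(1) by (simp add: algebra_simps)
  then obtain j where j: "N \<le> w (Suc j * k) - w (j * k)"
    using obtain_block_advance[of w m "N * W"] per \<open>0 < m\<close> by blast
  show thesis
  proof (rule that[of "\<lambda>i. w (j * k + i)"])
    show "w (j * k + i) mod N \<in> S" for i by (rule w_mem)
    show "w (j * k + Suc i) \<le> w (j * k + i) + G" for i by (simp add: w_Suc greedy_next_le)
    show "w (j * k + 0) + N \<le> w (j * k + k)" using j by (simp add: add.commute)
  qed
qed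

end

lemma starts_eq_arcs_through_point:
  fixes N R :: int and S :: "int set" and k :: nat
  assumes "0 < R" "R < N" "S \<subseteq> {0..<N}" "card S = nat R" "N < int k * (N - R)"
    and k_wise: "\<And>x. \<forall>i<k. x i mod N \<in> S \<Longrightarrow> \<exists>p. \<forall>i<k. p \<in> arc N R (x i)"
  shows "\<exists>p\<in>{0..<N}. S = {y \<in> {0..<N}. p \<in> arc N R y}"
proof (cases "\<exists>c. \<forall>j\<in>{c<..c + (N - R)}. j mod N \<notin> S")
  case True
  then obtain c where "S = {y \<in> {0..<N}. (c - y) mod N < R}"
    using starts_eq_of_gap[OF assms(1-4)] by blast
  moreover have "(c - y) mod N < R \<longleftrightarrow> c mod N \<in> arc N R y" for y
    using assms by (simp add: arc_def mod_diff_left_eq)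
  ultimately show ?thesis using assms by (intro bexI[of _ "c mod N"]) auto
next
  case False
  then have "\<And>c. \<exists>j\<in>{c<..c + (N - R)}. j mod N \<in> S" by blast
  then obtain x where x: "\<And>i. x i mod N \<in> S" "\<And>i. x (Suc i) \<le> x i + (N - R)" "x 0 + N \<le> x k"
    by (rule obtain_covering_chain) (use assms card_residues_diff in auto)
  obtain p where "\<forall>i<k. p \<in> arc N R (x i)" using k_wise x(1) by blast
  with no_common_point_of_covering_chain[OF assms(1,2) x(2,3)] show ?thesis by blast
qed

lemma k_wise_intersecting_arcs_form_star:
  fixes N R :: int and \<A> :: "int set set"
  assumes "0 < R" "R < N" "N < int k * (N - R)"
    and "\<A> \<subseteq> arc N R ` {0..<N}" "k_wise_intersecting k \<A>" "card \<A> = nat R"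
  shows "\<exists>p\<in>{0..<N}. \<A> = {A \<in> arc N R ` {0..<N}. p \<in> A}"
proof -
  define S where "S = {y \<in> {0..<N}. arc N R y \<in> \<A>}"
  have S_sub: "S \<subseteq> {0..<N}" by (auto simp: S_def)
  have \<A>: "\<A> = arc N R ` S"
  proof
    show "\<A> \<subseteq> arc N R ` S"
    proof
      fix A assume "A \<in> \<A>"
      moreover obtain y where "y \<in> {0..<N}" "A = arc N R y" using assms(4) \<open>A \<in> \<A>\<close> by blast
      ultimately show "A \<in> arc N R ` S" by (auto simp: S_def)
    qed
  qed (auto simp: S_def)
  have "inj_on (arc N R) S" using arc_inj_on[OF assms(1,2)] S_sub by (rule inj_on_subset)
  then have card_S: "card S = nat R" using assms(6) by (simp add: \<A> card_image)
  have k_wise: "\<exists>p. \<forall>i<k. p \<in> arc N R (x i)" if "\<forall>i<k. x i mod N \<in> S" for x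
  proof -
    have "\<forall>i<k. arc N R (x i mod N) \<in> \<A>" using that by (simp add: S_def)
    then have "(\<Inter>i<k. arc N R (x i mod N)) \<noteq> {}"
      using assms(5)[unfolded k_wise_intersecting_def, THEN spec[of _ "\<lambda>i. arc N R (x i mod N)"]]
      by simp
    then obtain p where "p \<in> (\<Inter>i<k. arc N R (x i mod N))" by blast
    then show ?thesis by (intro exI[of _ p]) simp
  qed
  obtain p where p: "p \<in> {0..<N}" "S = {y \<in> {0..<N}. p \<in> arc N R y}"
    using starts_eq_arcs_through_point[OF assms(1,2) S_sub card_S assms(3) k_wise] by blast
  have "\<A> = {A \<in> arc N R ` {0..<N}. p \<in> A}" unfolding \<A> p(2) by blast
  with p(1) show ?thesis by blast
qed

lemma cyclic_order_bij_betw_from_zero: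
  assumes "cyclic_order n \<sigma>"
  shows "bij_betw (\<lambda>p::int. \<sigma> (nat p + 1)) {0..<int n} {1..n}"
proof -
  have "bij_betw (\<lambda>p. nat p + 1) {0..<int n} {1..n}"
    by (rule bij_betw_byWitness[where f' = "\<lambda>x. int x - 1"]) auto
  then have "bij_betw (\<sigma> \<circ> (\<lambda>p. nat p + 1)) {0..<int n} {1..n}"
    using assms unfolding cyclic_order_def by (rule bij_betw_trans)
  then show ?thesis by (simp add: comp_def)
qed

lemma k_wise_intersecting_of_image:
  assumes "inj_on h U" "\<forall>A\<in>\<A>. A \<subseteq> U" "k_wise_intersecting k ((`) h ` \<A>)"
  shows "k_wise_intersecting k \<A>"
  unfolding k_wise_intersecting_def
proof (intro allI impI)
  fix Fs :: "nat \<Rightarrow> 'a set" assume Fs: "\<forall>i<k. Fs i \<in> \<A>"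
  show "(\<Inter>i<k. Fs i) \<noteq> {}"
  proof (cases "k = 0")
    case False
    have "(\<Inter>i<k. h ` Fs i) \<noteq> {}"
      using assms(3) Fs unfolding k_wise_intersecting_def by (metis image_eqI)
    moreover have "h ` (\<Inter>i<k. Fs i) = (\<Inter>i<k. h ` Fs i)"
      using False Fs assms(2) by (intro image_INT[OF assms(1)]) auto
    ultimately show ?thesis by auto
  qed simp
qed

lemma star_of_image:
  assumes h: "inj_on h U" and "\<C> \<subseteq> Pow U"
    and star: "\<And>\<A>. \<A> \<subseteq> \<C> \<Longrightarrow> k_wise_intersecting k \<A> \<Longrightarrow> card \<A> = c
      \<Longrightarrow> \<exists>p\<in>U. \<A> = {A \<in> \<C>. p \<in> A}"
    and "\<F> \<subseteq> (`) h ` \<C>" "k_wise_intersecting k \<F>" "card \<F> = c"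
  shows "\<exists>x\<in>h ` U. \<F> = {I \<in> (`) h ` \<C>. x \<in> I}"
proof -
  define \<A> where "\<A> = {A \<in> \<C>. h ` A \<in> \<F>}"
  have \<A>_sub: "\<A> \<subseteq> \<C>" by (auto simp: \<A>_def)
  have \<F>: "\<F> = (`) h ` \<A>"
  proof
    show "\<F> \<subseteq> (`) h ` \<A>"
    proof
      fix I assume "I \<in> \<F>"
      moreover obtain A where "A \<in> \<C>" "I = h ` A" using assms(4) \<open>I \<in> \<F>\<close> by blast
      ultimately show "I \<in> (`) h ` \<A>" by (auto simp: \<A>_def)
    qed
  qed (auto simp: \<A>_def)
  have "inj_on ((`) h) \<C>" using inj_on_image_Pow[OF h] assms(2) by (rule inj_on_subset)
  then have "card \<A> = c" using assms(6) \<A>_sub by (simp add: \<F> card_image inj_on_subset)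
  moreover have "k_wise_intersecting k \<A>"
    using h _ assms(5)[unfolded \<F>] by (rule k_wise_intersecting_of_image) (use \<A>_sub assms(2) in blast)
  ultimately obtain p where p: "p \<in> U" "\<A> = {A \<in> \<C>. p \<in> A}" using star \<A>_sub by blast
  have "h p \<in> h ` A \<longleftrightarrow> p \<in> A" if "A \<in> \<C>" for A
    using inj_on_image_mem_iff[OF h p(1)] assms(2) that by blast
  then have "\<F> = {I \<in> (`) h ` \<C>. h p \<in> I}" unfolding \<F> p(2) by auto
  with p(1) show ?thesis by blast
qed

lemma sigma_interval_eq_image_arc:
  fixes n r x :: nat
  assumes "0 < n" "r \<le> n" "x \<in> {1..n}"
  shows "sigma_interval n \<sigma> r x = (\<lambda>p. \<sigma> (nat p + 1)) ` arc n r (int x - 1)"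
proof (intro set_eqI iffI)
  fix q assume "q \<in> sigma_interval n \<sigma> r x"
  then obtain i where i: "i < r" "q = \<sigma> (((x + i - 1) mod n) + 1)" by (auto simp: sigma_interval_def)
  define p where "p = int ((x - 1 + i) mod n)"
  have "(p - (int x - 1)) mod int n = int i"
    using assms i by (simp add: p_def zmod_int of_nat_diff mod_diff_left_eq)
  then have "p \<in> arc n r (int x - 1)" using assms i by (simp add: arc_def p_def)
  moreover have "q = \<sigma> (nat p + 1)" using assms i by (simp add: p_def)
  ultimately show "q \<in> (\<lambda>p. \<sigma> (nat p + 1)) ` arc n r (int x - 1)" by blast
next
  fix q assume "q \<in> (\<lambda>p. \<sigma> (nat p + 1)) ` arc n r (int x - 1)"
  then obtain p where p: "p \<in> {0..<int n}" "(p - (int x - 1)) mod int n < int r" "q = \<sigma> (nat p + 1)"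
    by (auto simp: arc_def)
  define i where "i = nat ((p - (int x - 1)) mod int n)"
  have i_int: "int i = (p - (int x - 1)) mod int n" using assms by (simp add: i_def)
  have "int ((x + i - 1) mod n) = (int x - 1 + int i) mod int n"
    using assms by (simp add: zmod_int of_nat_diff algebra_simps)
  also have "\<dots> = p" using p(1) by (simp add: i_int mod_add_right_eq)
  finally have "q = \<sigma> (((x + i - 1) mod n) + 1)" using p(3) by (metis nat_int)
  moreover have "i < r" using p(2) assms by (simp add: i_def nat_less_iff)
  ultimately show "q \<in> sigma_interval n \<sigma> r x" by (auto simp: sigma_interval_def)
qed

lemma sigma_intervals_eq_image_arcs:
  assumes "0 < n" "r \<le> n"
  shows "sigma_intervals n \<sigma> r = (`) (\<lambda>p. \<sigma> (nat p + 1)) ` arc n r ` {0..<int n}"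
proof -
  have "{0..<int n} = (\<lambda>x. int x - 1) ` {1..n}"
  proof (intro set_eqI iffI)
    fix y assume "y \<in> {0..<int n}"
    then show "y \<in> (\<lambda>x. int x - 1) ` {1..n}" by (intro image_eqI[of _ _ "nat y + 1"]) auto
  qed auto
  then have "(`) (\<lambda>p. \<sigma> (nat p + 1)) ` arc n r ` {0..<int n}
      = (\<lambda>x. (\<lambda>p. \<sigma> (nat p + 1)) ` arc n r (int x - 1)) ` {1..n}"
    by (simp add: image_image)
  also have "\<dots> = (\<lambda>x. sigma_interval n \<sigma> r x) ` {1..n}"
    using sigma_interval_eq_image_arc[OF assms] by simp
  finally show ?thesis by (auto simp: sigma_intervals_def)
qed

lemma real_bound_imp_gap_bound:
  fixes k n r :: nat
  assumes "2 \<le> k" "real r < real ((k - 1) * n) / real k"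
  shows "r < n" "int n < int k * (int n - int r)"
proof -
  have "real (r * k) < real ((k - 1) * n)" using assms by (simp add: pos_less_divide_eq)
  then have rk: "r * k < (k - 1) * n" by (simp only: of_nat_less_iff)
  also have "\<dots> \<le> n * k" by (simp add: mult.commute)
  finally show "r < n" by simp
  have "int (r * k) < int ((k - 1) * n)" using rk by (simp only: of_nat_less_iff)
  then show "int n < int k * (int n - int r)" using assms(1) by (simp add: of_nat_diff algebra_simps)
qed

theorem lemma2p2:
  fixes k n r :: nat and \<sigma> :: "nat \<Rightarrow> nat" and \<F> :: "nat set set"
  assumes "k \<ge> 2" and "n > 0" and "r > 0"
    and "real r < real ((k - 1) * n) / real k"
    and "cyclic_order n \<sigma>"
    and "\<F> \<subseteq> sigma_intervals n \<sigma> r"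
    and "k_wise_intersecting k \<F>"
    and "card \<F> = r"
  shows "\<exists>x\<in>{1..n}. \<F> = {I \<in> sigma_intervals n \<sigma> r. x \<in> I}"
proof -
  have "r < n" and gap: "int n < int k * (int n - int r)"
    using real_bound_imp_gap_bound[OF assms(1,4)] by simp_all
  note \<tau> = cyclic_order_bij_betw_from_zero[OF assms(5)]
  note intervals = sigma_intervals_eq_image_arcs[OF assms(2) less_imp_le[OF \<open>r < n\<close>], of \<sigma>]
  have "\<exists>x\<in>(\<lambda>p. \<sigma> (nat p + 1)) ` {0..<int n}. \<F> = {I \<in> sigma_intervals n \<sigma> r. x \<in> I}"
    unfolding intervals
  proof (rule star_of_image[OF bij_betw_imp_inj_on[OF \<tau>]])
    show "arc n r ` {0..<int n} \<subseteq> Pow {0..<int n}" by (auto simp: arc_def)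
    show "\<exists>p\<in>{0..<int n}. \<A> = {A \<in> arc n r ` {0..<int n}. p \<in> A}"
      if "\<A> \<subseteq> arc n r ` {0..<int n}" "k_wise_intersecting k \<A>" "card \<A> = r" for \<A>
      using k_wise_intersecting_arcs_form_star[OF _ _ gap that(1,2)] that(3) assms(3) \<open>r < n\<close> by simp
  qed (use assms(6-8) intervals in auto)
  then show ?thesis unfolding bij_betw_imp_surj_on[OF \<tau>] .
qed

end
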